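(* For every integer $n\geq 2$, the operator $W_n^{*}$ on $H^2$ is densely Li-Yorke chaotic.
   Context: $H^2$ denotes the Hardy space of analytic functions $f(z)=\sum_{k\ge0}\hat f(k)z^k$ on the open unit disk with $\sum_{k}|\hat f(k)|^2<\infty$. For $n\in\mathbb{N}$, $W_n$ is the bounded operator on $H^2$ given by $W_nf(z)=(1+z+\cdots+z^{n-1})f(z^n)$, and $W_n^{*}$ is its adjoint. An operator $T$ on a Banach space $Y$ is densely Li-Yorke chaotic if there is an uncountable dense set $S\subseteq Y$ such that for all distinct $x,y\in S$, $\liminf_{k\to\infty}\|T^kx-T^ky\|=0$ and $\limsup_{k\to\infty}\|T^kx-T^ky\|=\infty$. *)

theory Defs
  imports "HOL-Analysis.Analysis"
begin

text \<open>The Hardy space H^2, represented via the Taylor coefficient sequence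
  f = (fhat k)_k of f(z) = sum_k fhat k z^k; it consists of the square-summable sequences.\<close>

definition H2 :: "(nat \<Rightarrow> complex) set" where
  "H2 = {a. summable (\<lambda>k. (cmod (a k))\<^sup>2)}"

definition h2norm :: "(nat \<Rightarrow> complex) \<Rightarrow> real" where
  "h2norm a = sqrt (\<Sum>k. (cmod (a k))\<^sup>2)"

definition h2inner :: "(nat \<Rightarrow> complex) \<Rightarrow> (nat \<Rightarrow> complex) \<Rightarrow> complex" where
  "h2inner a b = (\<Sum>k. a k * cnj (b k))"

text \<open>W_n f(z) = (1 + z + ... + z^(n-1)) f(z^n): the coefficient of z^(n j + r), r < n,
  equals fhat j, i.e. the k-th coefficient is fhat (k div n).\<close>

definition W :: "nat \<Rightarrow> (nat \<Rightarrow> complex) \<Rightarrow> (nat \<Rightarrow> complex)" where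
  "W n a = (\<lambda>k. a (k div n))"

definition Wadj :: "nat \<Rightarrow> (nat \<Rightarrow> complex) \<Rightarrow> (nat \<Rightarrow> complex)" where
  "Wadj n g = (THE h. h \<in> H2 \<and> (\<forall>f\<in>H2. h2inner (W n f) g = h2inner f h))"

definition densely_Li_Yorke_chaotic ::
  "('a::minus) set \<Rightarrow> ('a \<Rightarrow> real) \<Rightarrow> ('a \<Rightarrow> 'a) \<Rightarrow> bool" where
  "densely_Li_Yorke_chaotic Y nrm T \<longleftrightarrow>
     (\<exists>S\<subseteq>Y. uncountable S
        \<and> (\<forall>y\<in>Y. \<forall>e>0. \<exists>s\<in>S. nrm (y - s) < e)
        \<and> (\<forall>x\<in>S. \<forall>y\<in>S. x \<noteq> y \<longrightarrow>
              liminf (\<lambda>k. ereal (nrm ((T ^^ k) x - (T ^^ k) y))) = 0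
            \<and> limsup (\<lambda>k. ereal (nrm ((T ^^ k) x - (T ^^ k) y))) = \<infinity>))"

end

theory Submission
  imports Defs
begin

text \<open>On coefficient sequences W_n^* is block summation, (W_n^* g)_j = g_{nj} + ... + g_{nj+n-1}.
  It preserves the sum of a finitely supported sequence and divides the length of its support by n,
  so a sequence supported in [0, n^K) with zero sum is annihilated by the K-th power; such sequences
  with Gaussian-rational entries form a countable dense set (e_m), enumerated so that every term
  recurs at arbitrarily large indices. A normalised difference b_m of two adjacent blocks of length n^m
  is mapped by the m-th power to a fixed nonzero vector and annihilated by the (m+2)-nd, while its norm
  is of order n^(-m/2). Hence u = sum_j 2^j b_(2*4^j) is an irregular vector: along the times 2*4^J
  the orbit of u has norm at least 2^J - 2, and along 2*4^J + 2 at most 2^(1-J). The vectors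
  e_m + c u with (1/2)^(m+1) < c < (1/2)^m form an uncountable dense set in which the orbits of any
  two distinct members eventually differ by (c - c') times the orbit of u.\<close>

lemma H2_summable: "a \<in> H2 \<Longrightarrow> summable (\<lambda>k. (cmod (a k))\<^sup>2)"
  by (simp add: H2_def)

lemma h2norm_nonneg: "a \<in> H2 \<Longrightarrow> h2norm a \<ge> 0"
  by (simp add: h2norm_def suminf_nonneg H2_summable)

lemma h2norm_power2: "a \<in> H2 \<Longrightarrow> (h2norm a)\<^sup>2 = (\<Sum>k. (cmod (a k))\<^sup>2)"
  unfolding h2norm_def using suminf_nonneg[OF H2_summable] by simp

lemma sum_power2_le_h2norm:
  assumes "finite F" "a \<in> H2"
  shows "(\<Sum>k\<in>F. (cmod (a k))\<^sup>2) \<le> (h2norm a)\<^sup>2"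
  using sum_le_suminf[OF H2_summable[OF assms(2)] assms(1)] by (simp add: h2norm_power2 assms(2))

lemma L2_set_le_h2norm: "a \<in> H2 \<Longrightarrow> finite F \<Longrightarrow> L2_set (\<lambda>k. cmod (a k)) F \<le> h2norm a"
  unfolding L2_set_def
  by (metis h2norm_nonneg real_sqrt_abs real_sqrt_le_mono sum_power2_le_h2norm abs_of_nonneg)

lemma norm_le_h2norm: "a \<in> H2 \<Longrightarrow> cmod (a i) \<le> h2norm a"
  using L2_set_le_h2norm[of a "{i}"] by simp

lemma H2_finite_support:
  assumes "\<And>i. i \<ge> N \<Longrightarrow> a i = 0"
  shows "a \<in> H2" and "h2norm a = L2_set (\<lambda>i. cmod (a i)) {..<N}"
proof -
  have "(\<lambda>k. (cmod (a k))\<^sup>2) sums (\<Sum>i<N. (cmod (a i))\<^sup>2)"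
    by (rule sums_finite) (auto simp: assms)
  then show "a \<in> H2" "h2norm a = L2_set (\<lambda>i. cmod (a i)) {..<N}"
    by (auto simp: H2_def h2norm_def L2_set_def sums_iff)
qed

lemma H2_pointwise_limit:
  assumes "\<And>N. g N \<in> H2" and "\<And>N. h2norm (g N) \<le> C"
    and "\<And>i. \<forall>\<^sub>F N in sequentially. g N i = a i"
  shows "a \<in> H2" and "h2norm a \<le> C"
proof -
  have partial: "(\<Sum>k<K. (cmod (a k))\<^sup>2) \<le> C\<^sup>2" for K
  proof -
    have "\<forall>\<^sub>F N in sequentially. \<forall>k\<in>{..<K}. g N k = a k"
      using assms(3) by (simp add: eventually_ball_finite_distrib)
    then obtain N where N: "\<And>k. k < K \<Longrightarrow> g N k = a k"
      by (auto simp: eventually_sequentially)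
    have "(\<Sum>k<K. (cmod (a k))\<^sup>2) = (\<Sum>k<K. (cmod (g N k))\<^sup>2)"
      by (simp add: N)
    also have "\<dots> \<le> (h2norm (g N))\<^sup>2"
      by (rule sum_power2_le_h2norm) (auto simp: assms(1))
    also have "\<dots> \<le> C\<^sup>2"
      by (rule power_mono[OF assms(2) h2norm_nonneg[OF assms(1)]])
    finally show ?thesis .
  qed
  have "summable (\<lambda>k. (cmod (a k))\<^sup>2)"
    by (rule bounded_imp_summable[of _ "C\<^sup>2"]) (simp, metis partial lessThan_Suc_atMost)
  then show "a \<in> H2" by (simp add: H2_def)
  have "(\<Sum>k. (cmod (a k))\<^sup>2) \<le> C\<^sup>2"
    by (rule suminf_le_const[OF \<open>summable _\<close> partial])
  moreover have "C \<ge> 0"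
    using order_trans[OF h2norm_nonneg[OF assms(1)] assms(2)] .
  ultimately show "h2norm a \<le> C"
    unfolding h2norm_def by (simp add: real_sqrt_le_iff' suminf_nonneg \<open>summable _\<close>)
qed

lemma H2_if_truncations_bounded:
  assumes "\<And>N. h2norm (\<lambda>i. if i < N then a i else 0) \<le> C"
  shows "a \<in> H2" and "h2norm a \<le> C"
proof -
  have "\<forall>\<^sub>F N in sequentially. (if i < N then a i else 0) = a i" for i
    by (rule eventually_sequentiallyI[of "Suc i"]) simp
  moreover have "(\<lambda>i. if i < N then a i else 0) \<in> H2" for N
    by (rule H2_finite_support(1)[of N]) simp
  ultimately show "a \<in> H2" "h2norm a \<le> C"
    using H2_pointwise_limit[where g = "\<lambda>N i. if i < N then a i else 0"] assms by blast+
qed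

lemma H2_add:
  assumes "a \<in> H2" "b \<in> H2"
  shows "(\<lambda>i. a i + b i) \<in> H2" and "h2norm (\<lambda>i. a i + b i) \<le> h2norm a + h2norm b"
proof -
  have "h2norm (\<lambda>i. if i < N then a i + b i else 0) \<le> h2norm a + h2norm b" for N
  proof -
    have "h2norm (\<lambda>i. if i < N then a i + b i else 0) = L2_set (\<lambda>i. cmod (a i + b i)) {..<N}"
      by (subst H2_finite_support(2)[of N]) (auto intro: L2_set_cong)
    also have "\<dots> \<le> L2_set (\<lambda>i. cmod (a i) + cmod (b i)) {..<N}"
      by (rule L2_set_mono) (auto simp: norm_triangle_ineq)
    also have "\<dots> \<le> L2_set (\<lambda>i. cmod (a i)) {..<N} + L2_set (\<lambda>i. cmod (b i)) {..<N}"
      by (rule L2_set_triangle_ineq)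
    also have "\<dots> \<le> h2norm a + h2norm b"
      using assms by (intro add_mono L2_set_le_h2norm) auto
    finally show ?thesis .
  qed
  then show "(\<lambda>i. a i + b i) \<in> H2" "h2norm (\<lambda>i. a i + b i) \<le> h2norm a + h2norm b"
    by (auto intro: H2_if_truncations_bounded[where a = "\<lambda>i. a i + b i"])
qed

lemma H2_scale:
  assumes "a \<in> H2"
  shows "(\<lambda>i. c * a i) \<in> H2" and "h2norm (\<lambda>i. c * a i) = cmod c * h2norm a"
proof -
  have sq: "(\<lambda>k. (cmod (c * a k))\<^sup>2) = (\<lambda>k. (cmod c)\<^sup>2 * (cmod (a k))\<^sup>2)"
    by (simp add: norm_mult power_mult_distrib)
  show "(\<lambda>i. c * a i) \<in> H2"
    unfolding H2_def mem_Collect_eq sq by (rule summable_mult[OF H2_summable[OF assms]])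
  show "h2norm (\<lambda>i. c * a i) = cmod c * h2norm a"
    unfolding h2norm_def sq suminf_mult[OF H2_summable[OF assms]] by (simp add: real_sqrt_mult)
qed

lemma H2_diff:
  assumes "a \<in> H2" "b \<in> H2"
  shows "(\<lambda>i. a i - b i) \<in> H2" and "h2norm (\<lambda>i. a i - b i) \<le> h2norm a + h2norm b"
  using H2_add[OF assms(1) H2_scale(1)[OF assms(2), of "-1"]] H2_scale(2)[OF assms(2), of "-1"]
  by simp_all

lemma H2_zero: "(\<lambda>i. 0) \<in> H2" and h2norm_zero: "h2norm (\<lambda>i. 0) = 0"
  using H2_finite_support[of 0 "\<lambda>i. 0"] by auto

lemma H2_sum: "(\<And>j. j \<in> F \<Longrightarrow> v j \<in> H2) \<Longrightarrow> (\<lambda>i. \<Sum>j\<in>F. v j i) \<in> H2"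
  by (induction F rule: infinite_finite_induct) (simp_all add: H2_zero H2_add(1))

lemma h2norm_sum_le:
  "(\<And>j. j \<in> F \<Longrightarrow> v j \<in> H2) \<Longrightarrow> h2norm (\<lambda>i. \<Sum>j\<in>F. v j i) \<le> (\<Sum>j\<in>F. h2norm (v j))"
proof (induction F rule: infinite_finite_induct)
  case (insert j F)
  then show ?case
    using H2_add(2)[of "v j" "\<lambda>i. \<Sum>j\<in>F. v j i"] H2_sum[of F v] by simp
qed (simp_all add: h2norm_zero)

lemma sum_indicator_lessThan:
  assumes "q \<le> N"
  shows "(\<Sum>i<N. indicator {p..<q} i :: 'a::semiring_1) = of_nat (q - p)"
proof -
  have "(\<Sum>i<N. indicator {p..<q} i :: 'a) = (\<Sum>i\<in>{p..<q}. 1)"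
    by (rule sum.mono_neutral_cong_right) (use assms in auto)
  then show ?thesis by simp
qed

lemma H2_indicator: "indicator {p..<q} \<in> H2"
  and h2norm_indicator: "h2norm (indicator {p..<q}) = sqrt (q - p)"
proof -
  show "indicator {p..<q} \<in> H2"
    by (rule H2_finite_support(1)[of q]) simp
  have "h2norm (indicator {p..<q} :: nat \<Rightarrow> complex) = L2_set (indicator {p..<q}) {..<q}"
    by (subst H2_finite_support(2)[of q]) (auto intro: L2_set_cong simp: indicator_def)
  also have "\<dots> = sqrt (\<Sum>i<q. indicator {p..<q} i)"
    unfolding L2_set_def by (intro arg_cong[where f = sqrt] sum.cong) (auto simp: indicator_def)
  finally show "h2norm (indicator {p..<q}) = sqrt (q - p)"
    by (simp add: sum_indicator_lessThan)
qed

section \<open>The adjoint of W_n is block summation\<close>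

definition block_sum :: "nat \<Rightarrow> (nat \<Rightarrow> complex) \<Rightarrow> nat \<Rightarrow> complex" where
  "block_sum n g j = (\<Sum>r<n. g (n * j + r))"

lemma sum_block_eq:
  fixes n j :: nat
  shows "(\<Sum>r<n. f (n * j + r)) = sum f {j*n..<j*n+n}"
proof -
  have "sum f {j*n..<j*n+n} = (\<Sum>r = 0..<n. f (r + j*n))"
    using sum.shift_bounds_nat_ivl[of f 0 "j*n" n] by (simp add: add.commute)
  then show ?thesis
    by (simp add: atLeast0LessThan algebra_simps)
qed

lemma block_sum_eq_sum_block: "block_sum n g j = sum g {j*n..<j*n+n}"
  by (simp add: block_sum_def sum_block_eq)

lemma div_eq_of_mem_block:
  fixes k j n :: nat
  shows "k \<in> {j*n..<j*n+n} \<Longrightarrow> k div n = j"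
  by (rule div_nat_eqI) (auto simp: algebra_simps)

lemma H2_block_sum:
  assumes n: "0 < n" and g: "g \<in> H2"
  shows "block_sum n g \<in> H2" and "h2norm (block_sum n g) \<le> sqrt n * h2norm g"
proof -
  define G where "G j = (\<Sum>k\<in>{j*n..<j*n+n}. (cmod (g k))\<^sup>2)" for j
  have G: "G sums (h2norm g)\<^sup>2"
    unfolding G_def h2norm_power2[OF g] by (rule sums_group[OF summable_sums[OF H2_summable[OF g]] n])
  have bound: "(cmod (block_sum n g j))\<^sup>2 \<le> n * G j" for j
  proof -
    have "cmod (block_sum n g j) \<le> (\<Sum>r<n. 1 * cmod (g (n*j + r)))"
      unfolding block_sum_def by (simp add: norm_sum)
    then have "(cmod (block_sum n g j))\<^sup>2 \<le> (\<Sum>r<n. 1 * cmod (g (n*j + r)))\<^sup>2"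
      by (simp add: power_mono)
    also have "\<dots> \<le> (\<Sum>r<n. 1\<^sup>2) * (\<Sum>r<n. (cmod (g (n*j + r)))\<^sup>2)"
      by (rule Cauchy_Schwarz_ineq_sum)
    also have "\<dots> = n * G j"
      using sum_block_eq[of "\<lambda>k. (cmod (g k))\<^sup>2" n j] by (simp add: G_def)
    finally show ?thesis .
  qed
  have nG: "(\<lambda>j. n * G j) sums (n * (h2norm g)\<^sup>2)"
    by (rule sums_mult[OF G])
  have summable: "summable (\<lambda>j. (cmod (block_sum n g j))\<^sup>2)"
    by (rule summable_comparison_test[OF _ sums_summable[OF nG]]) (use bound in auto)
  then show "block_sum n g \<in> H2" by (simp add: H2_def)
  have "(h2norm (block_sum n g))\<^sup>2 \<le> (sqrt n * h2norm g)\<^sup>2"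
    using suminf_le[OF bound summable sums_summable[OF nG]] nG
    by (simp add: h2norm_power2[OF \<open>block_sum n g \<in> H2\<close>] sums_iff power_mult_distrib)
  then show "h2norm (block_sum n g) \<le> sqrt n * h2norm g"
    by (rule power2_le_imp_le) (simp add: h2norm_nonneg[OF g])
qed

lemma H2_W:
  assumes n: "0 < n" and f: "f \<in> H2"
  shows "W n f \<in> H2"
proof -
  have block: "(\<Sum>k\<in>{j*n..<j*n+n}. (cmod (W n f k))\<^sup>2) = n * (cmod (f j))\<^sup>2" for j
  proof -
    have "(\<Sum>k\<in>{j*n..<j*n+n}. (cmod (W n f k))\<^sup>2) = (\<Sum>k\<in>{j*n..<j*n+n}. (cmod (f j))\<^sup>2)"
      by (rule sum.cong) (simp_all add: W_def div_eq_of_mem_block[of _ j n])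
    then show ?thesis by simp
  qed
  have "(\<Sum>k<N. (cmod (W n f k))\<^sup>2) \<le> n * (h2norm f)\<^sup>2" for N
  proof -
    have "(\<Sum>k<N. (cmod (W n f k))\<^sup>2) \<le> (\<Sum>k<N*n. (cmod (W n f k))\<^sup>2)"
      by (rule sum_mono2) (use n in auto)
    also have "\<dots> = (\<Sum>j<N. n * (cmod (f j))\<^sup>2)"
      by (simp add: sum.nat_group[symmetric] block)
    also have "\<dots> \<le> n * (h2norm f)\<^sup>2"
      using sum_power2_le_h2norm[OF _ f, of "{..<N}"]
      by (simp add: sum_distrib_left[symmetric] mult_left_mono)
    finally show ?thesis .
  qed
  then have "summable (\<lambda>k. (cmod (W n f k))\<^sup>2)"
    by (intro bounded_imp_summable[of _ "n * (h2norm f)\<^sup>2"]) (simp, metis lessThan_Suc_atMost)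
  then show ?thesis by (simp add: H2_def)
qed

lemma summable_norm_h2inner:
  assumes "a \<in> H2" "b \<in> H2"
  shows "summable (\<lambda>k. norm (a k * cnj (b k)))"
proof (rule summable_comparison_test[OF _ summable_add[OF H2_summable[OF assms(1)] H2_summable[OF assms(2)]]])
  have "cmod (a k) * cmod (b k) \<le> (cmod (a k))\<^sup>2 + (cmod (b k))\<^sup>2" for k
    using sum_squares_bound[of "cmod (a k)" "cmod (b k)"]
      mult_nonneg_nonneg[OF norm_ge_zero norm_ge_zero, of "a k" "b k"]
    by linarith
  then show "\<exists>N. \<forall>k\<ge>N. norm (norm (a k * cnj (b k))) \<le> (cmod (a k))\<^sup>2 + (cmod (b k))\<^sup>2"
    by (simp add: norm_mult)
qed

lemma h2inner_W_block_sum: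
  assumes n: "0 < n" and f: "f \<in> H2" and g: "g \<in> H2"
  shows "h2inner (W n f) g = h2inner f (block_sum n g)"
proof -
  define t where "t k = W n f k * cnj (g k)" for k
  have "t sums h2inner (W n f) g"
    unfolding t_def h2inner_def
    by (rule summable_sums[OF summable_norm_cancel[OF summable_norm_h2inner[OF H2_W[OF n f] g]]])
  then have "(\<lambda>j. \<Sum>k\<in>{j*n..<j*n+n}. t k) sums h2inner (W n f) g"
    by (rule sums_group[OF _ n])
  moreover have "(\<Sum>k\<in>{j*n..<j*n+n}. t k) = f j * cnj (block_sum n g j)" for j
    unfolding block_sum_eq_sum_block sum_distrib_left cnj_sum
    by (intro sum.cong) (simp_all add: t_def W_def div_eq_of_mem_block[of _ j n])
  ultimately show ?thesis
    by (simp add: h2inner_def sums_iff)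
qed

lemma h2inner_indicator_singleton: "h2inner (indicator {j}) h = cnj (h j)"
  unfolding h2inner_def by (subst suminf_finite[of "{j}"]) auto

lemma Wadj_eq_block_sum:
  assumes n: "0 < n" and g: "g \<in> H2"
  shows "Wadj n g = block_sum n g"
  unfolding Wadj_def
proof (rule the_equality)
  show "block_sum n g \<in> H2 \<and> (\<forall>f\<in>H2. h2inner (W n f) g = h2inner f (block_sum n g))"
    using H2_block_sum(1)[OF n g] h2inner_W_block_sum[OF n _ g] by blast
next
  fix h assume h: "h \<in> H2 \<and> (\<forall>f\<in>H2. h2inner (W n f) g = h2inner f h)"
  have "cnj (h j) = cnj (block_sum n g j)" for j
    using h h2inner_W_block_sum[OF n _ g, of "indicator {j}"] H2_finite_support(1)[of "Suc j"]
    by (auto simp: h2inner_indicator_singleton)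
  then show "h = block_sum n g" by auto
qed

section \<open>Dense Li-Yorke chaos from an irregular vector\<close>

lemma liminf_ereal_eq_0_if_subseq:
  fixes X :: "nat \<Rightarrow> real"
  assumes "\<And>k. 0 \<le> X k" "strict_mono r" "(X \<circ> r) \<longlonglongrightarrow> 0"
  shows "liminf (\<lambda>k. ereal (X k)) = 0"
proof (rule antisym)
  have "((\<lambda>k. ereal (X k)) \<circ> r) \<longlonglongrightarrow> ereal 0"
    using assms(3) by (simp add: comp_def tendsto_ereal)
  then have "liminf ((\<lambda>k. ereal (X k)) \<circ> r) = 0"
    using lim_imp_Liminf[of sequentially] zero_ereal_def by auto
  then show "liminf (\<lambda>k. ereal (X k)) \<le> 0"
    using liminf_subseq_mono[OF assms(2)] by metis
  show "0 \<le> liminf (\<lambda>k. ereal (X k))"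
    by (rule Liminf_bounded) (simp add: assms(1))
qed

lemma limsup_ereal_eq_infty_if_subseq:
  fixes X :: "nat \<Rightarrow> real"
  assumes "strict_mono r" "filterlim (X \<circ> r) at_top sequentially"
  shows "limsup (\<lambda>k. ereal (X k)) = \<infinity>"
proof -
  have "((\<lambda>k. ereal (X k)) \<circ> r) \<longlonglongrightarrow> \<infinity>"
    using assms(2) by (simp add: comp_def tendsto_PInfty_eq_at_top)
  then have "limsup ((\<lambda>k. ereal (X k)) \<circ> r) = \<infinity>"
    using lim_imp_Limsup[of sequentially] by auto
  then show ?thesis
    using limsup_subseq_mono[OF assms(1)] by (metis top.extremum_unique top_ereal_def)
qed

lemma liminf_ereal_scale:
  fixes X :: "nat \<Rightarrow> real"
  assumes "0 < c"
  shows "liminf (\<lambda>k. ereal (c * X k)) = ereal c * liminf (\<lambda>k. ereal (X k))"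
  using ereal_liminf_lim_mult[OF tendsto_const, of "ereal c" "\<lambda>k. ereal (X k)"] assms by simp

lemma limsup_ereal_scale:
  fixes X :: "nat \<Rightarrow> real"
  assumes "0 < c"
  shows "limsup (\<lambda>k. ereal (c * X k)) = ereal c * limsup (\<lambda>k. ereal (X k))"
  using ereal_limsup_lim_mult[OF tendsto_const, of "ereal c" "\<lambda>k. ereal (X k)"] assms by simp

lemma half_power_intervals_disjoint:
  assumes "(1/2::real)^Suc m < c" "c < (1/2)^m" "(1/2)^Suc m' < c" "c < (1/2)^m'"
  shows "m = m'"
proof (rule ccontr)
  assume "m \<noteq> m'"
  then consider "Suc m \<le> m'" | "Suc m' \<le> m" by linarith
  then show False
  proof cases
    case 1
    then have "(1/2::real)^m' \<le> (1/2)^Suc m" by (rule power_decreasing) auto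
    with assms show False by linarith
  next
    case 2
    then have "(1/2::real)^m \<le> (1/2)^Suc m'" by (rule power_decreasing) auto
    with assms show False by linarith
  qed
qed

text \<open>Distinct members of this set have distinct coefficients c, since the intervals
  ((1/2)^(m+1), (1/2)^m) are disjoint; and it is dense as soon as every e m recurs at arbitrarily
  large indices m, which makes the perturbation c * u small.\<close>

definition Li_Yorke_set ::
    "(nat \<Rightarrow> nat \<Rightarrow> complex) \<Rightarrow> (nat \<Rightarrow> complex) \<Rightarrow> (nat \<Rightarrow> complex) set" where
  "Li_Yorke_set e u =
     {(\<lambda>i. e m i + complex_of_real c * u i) | m c. (1/2)^Suc m < c \<and> c < (1/2)^m}"

lemma Li_Yorke_set_uncountable:
  fixes e :: "nat \<Rightarrow> nat \<Rightarrow> complex"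
  assumes "u \<noteq> (\<lambda>i. 0)"
  shows "uncountable (Li_Yorke_set e u)"
proof
  assume countable: "countable (Li_Yorke_set e u)"
  obtain i0 where "u i0 \<noteq> 0" using assms by auto
  define g where "g c = (\<lambda>i. e 0 i + complex_of_real c * u i)" for c
  have "inj_on g {1/2<..<1}"
  proof (rule inj_onI)
    fix c c' assume "g c = g c'"
    then have "g c i0 = g c' i0" by simp
    with \<open>u i0 \<noteq> 0\<close> show "c = c'" by (simp add: g_def)
  qed
  moreover have "g c \<in> Li_Yorke_set e u" if "c \<in> {1/2<..<1}" for c
    unfolding g_def Li_Yorke_set_def using that by (intro CollectI exI[of _ 0] exI[of _ c]) simp
  then have "g ` {1/2<..<1} \<subseteq> Li_Yorke_set e u" by blast
  ultimately have "countable {1/2<..<(1::real)}"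
    using countable_subset[OF _ countable] countable_image_inj_on by blast
  then show False
    using uncountable_open_interval[of "1/2" "1::real"] by simp
qed

lemma Li_Yorke_set_dense:
  fixes e :: "nat \<Rightarrow> nat \<Rightarrow> complex"
  assumes e_dense: "\<And>y \<epsilon> N. y \<in> H2 \<Longrightarrow> 0 < \<epsilon> \<Longrightarrow> \<exists>m\<ge>N. h2norm (y - e m) < \<epsilon>"
    and e_H2: "\<And>m. e m \<in> H2" and u_H2: "u \<in> H2"
    and "y \<in> H2" "0 < \<epsilon>"
  shows "\<exists>s\<in>Li_Yorke_set e u. h2norm (y - s) < \<epsilon>"
proof -
  have u0: "0 \<le> h2norm u" by (rule h2norm_nonneg[OF u_H2])
  obtain N where N: "(1/2::real)^N * (h2norm u + 1) < \<epsilon>/2"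
    using real_arch_pow_inv[of "\<epsilon> / (2 * (h2norm u + 1))" "1/2"] \<open>0 < \<epsilon>\<close> u0
    by (auto simp: field_simps)
  obtain m where "m \<ge> N" and m: "h2norm (\<lambda>i. y i - e m i) < \<epsilon>/2"
    using e_dense[OF \<open>y \<in> H2\<close>, of "\<epsilon>/2" N] \<open>0 < \<epsilon>\<close> by (auto simp: fun_diff_def)
  define c :: real where "c = (3/4) * (1/2)^m"
  have "0 \<le> c" by (simp add: c_def)
  define s where "s = (\<lambda>i. e m i + complex_of_real c * u i)"
  have "s \<in> Li_Yorke_set e u"
    unfolding Li_Yorke_set_def s_def by (intro CollectI exI[of _ m] exI[of _ c]) (simp add: c_def)
  have "h2norm (y - s) = h2norm (\<lambda>i. (y i - e m i) - complex_of_real c * u i)"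
    by (simp add: s_def fun_diff_def algebra_simps)
  also have "\<dots> \<le> h2norm (\<lambda>i. y i - e m i) + c * h2norm u"
    using H2_diff(2)[OF H2_diff(1)[OF \<open>y \<in> H2\<close> e_H2[of m]] H2_scale(1)[OF u_H2, of c]]
    by (simp add: H2_scale(2)[OF u_H2] \<open>0 \<le> c\<close>)
  also have "c * h2norm u \<le> (1/2)^N * (h2norm u + 1)"
  proof -
    have "c \<le> (1/2)^N"
      using power_decreasing[OF \<open>m \<ge> N\<close>, of "1/2::real"] zero_le_power[of "1/2::real" m]
      unfolding c_def by linarith
    then show ?thesis using u0 \<open>0 \<le> c\<close> by (intro mult_mono) auto
  qed
  finally have "h2norm (y - s) < \<epsilon>"
    using m N by linarith
  with \<open>s \<in> Li_Yorke_set e u\<close> show ?thesis by blast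
qed

locale H2_operator =
  fixes T :: "(nat \<Rightarrow> complex) \<Rightarrow> nat \<Rightarrow> complex"
  assumes additive: "T (\<lambda>i. a i + b i) = (\<lambda>i. T a i + T b i)"
    and homogeneous: "T (\<lambda>i. c * a i) = (\<lambda>i. c * T a i)"
    and maps_H2: "a \<in> H2 \<Longrightarrow> T a \<in> H2"
begin

lemma iter_add: "(T ^^ k) (\<lambda>i. a i + b i) = (\<lambda>i. (T ^^ k) a i + (T ^^ k) b i)"
  by (induction k) (simp_all add: additive)

lemma iter_scale: "(T ^^ k) (\<lambda>i. c * a i) = (\<lambda>i. c * (T ^^ k) a i)"
  by (induction k) (simp_all add: homogeneous)

lemma iter_zero: "(T ^^ k) (\<lambda>i. 0) = (\<lambda>i. 0)"
  using iter_scale[of k 0 "\<lambda>i. 0"] by simp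

lemma iter_diff: "(T ^^ k) (\<lambda>i. a i - b i) = (\<lambda>i. (T ^^ k) a i - (T ^^ k) b i)"
  using iter_add[of k a "\<lambda>i. -1 * b i"] iter_scale[of k "-1" b] by simp

lemma iter_sum: "(T ^^ k) (\<lambda>i. \<Sum>j\<in>F. v j i) = (\<lambda>i. \<Sum>j\<in>F. (T ^^ k) (v j) i)"
  by (induction F rule: infinite_finite_induct) (simp_all add: iter_zero iter_add)

lemma iter_H2: "a \<in> H2 \<Longrightarrow> (T ^^ k) a \<in> H2"
  by (induction k) (simp_all add: maps_H2)

lemma iter_eq_zero_mono:
  assumes "(T ^^ K) a = (\<lambda>i. 0)" "K \<le> k"
  shows "(T ^^ k) a = (\<lambda>i. 0)"
proof -
  obtain d where "k = d + K"
    using assms(2) by (metis add.commute le_iff_add)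
  then have "(T ^^ k) a = (T ^^ d) ((T ^^ K) a)"
    by (simp only: funpow_add comp_apply)
  then show ?thesis by (simp add: assms(1) iter_zero)
qed

lemma Li_Yorke_pair:
  fixes c c' :: real
  assumes "(T ^^ K) a = (\<lambda>i. 0)" "(T ^^ K') a' = (\<lambda>i. 0)" "c \<noteq> c'"
    and u_H2: "u \<in> H2"
    and u_liminf: "liminf (\<lambda>k. ereal (h2norm ((T ^^ k) u))) = 0"
    and u_limsup: "limsup (\<lambda>k. ereal (h2norm ((T ^^ k) u))) = \<infinity>"
  defines "x \<equiv> \<lambda>i. a i + complex_of_real c * u i" and "y \<equiv> \<lambda>i. a' i + complex_of_real c' * u i"
  shows "liminf (\<lambda>k. ereal (h2norm ((T ^^ k) x - (T ^^ k) y))) = 0"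
    and "limsup (\<lambda>k. ereal (h2norm ((T ^^ k) x - (T ^^ k) y))) = \<infinity>"
proof -
  define d where "d = \<bar>c - c'\<bar>"
  have "0 < d" using \<open>c \<noteq> c'\<close> by (simp add: d_def)
  have "h2norm ((T ^^ k) x - (T ^^ k) y) = d * h2norm ((T ^^ k) u)" if "max K K' \<le> k" for k
  proof -
    have "(T ^^ k) x - (T ^^ k) y = (\<lambda>i. complex_of_real (c - c') * (T ^^ k) u i)"
      using iter_eq_zero_mono[OF assms(1), of k] iter_eq_zero_mono[OF assms(2), of k] that
      by (simp add: x_def y_def iter_add iter_scale fun_diff_def algebra_simps)
    then show ?thesis
      by (simp add: H2_scale(2)[OF iter_H2[OF u_H2]] d_def del: of_real_diff)
  qed
  then have ev: "\<forall>\<^sub>F k in sequentially.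
      ereal (h2norm ((T ^^ k) x - (T ^^ k) y)) = ereal (d * h2norm ((T ^^ k) u))"
    by (intro eventually_sequentiallyI[of "max K K'"]) simp
  have "liminf (\<lambda>k. ereal (h2norm ((T ^^ k) x - (T ^^ k) y))) = ereal d * 0"
    using Liminf_eq[OF ev] liminf_ereal_scale[OF \<open>0 < d\<close>] u_liminf by simp
  then show "liminf (\<lambda>k. ereal (h2norm ((T ^^ k) x - (T ^^ k) y))) = 0"
    by simp
  have "limsup (\<lambda>k. ereal (h2norm ((T ^^ k) x - (T ^^ k) y))) = ereal d * \<infinity>"
    using Limsup_eq[OF ev] limsup_ereal_scale[OF \<open>0 < d\<close>] u_limsup by simp
  then show "limsup (\<lambda>k. ereal (h2norm ((T ^^ k) x - (T ^^ k) y))) = \<infinity>"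
    using \<open>0 < d\<close> by simp
qed

theorem densely_Li_Yorke_chaotic_if_irregular_vector:
  fixes e :: "nat \<Rightarrow> nat \<Rightarrow> complex"
  assumes e_H2: "\<And>m. e m \<in> H2"
    and e_null: "\<And>m. \<exists>K. (T ^^ K) (e m) = (\<lambda>i. 0)"
    and e_dense: "\<And>y \<epsilon> N. y \<in> H2 \<Longrightarrow> 0 < \<epsilon> \<Longrightarrow> \<exists>m\<ge>N. h2norm (y - e m) < \<epsilon>"
    and u_H2: "u \<in> H2"
    and u_liminf: "liminf (\<lambda>k. ereal (h2norm ((T ^^ k) u))) = 0"
    and u_limsup: "limsup (\<lambda>k. ereal (h2norm ((T ^^ k) u))) = \<infinity>"
  shows "densely_Li_Yorke_chaotic H2 h2norm T"
  unfolding densely_Li_Yorke_chaotic_def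
proof (intro exI[of _ "Li_Yorke_set e u"] conjI ballI allI impI)
  show "Li_Yorke_set e u \<subseteq> H2"
    by (auto simp: Li_Yorke_set_def intro!: H2_add(1) H2_scale(1) e_H2 u_H2)
  have "u \<noteq> (\<lambda>i. 0)"
    using u_limsup by (auto simp: iter_zero h2norm_zero Limsup_const)
  then show "uncountable (Li_Yorke_set e u)"
    by (rule Li_Yorke_set_uncountable)
  show "\<exists>s\<in>Li_Yorke_set e u. h2norm (y - s) < \<epsilon>" if "y \<in> H2" "0 < \<epsilon>" for y \<epsilon>
    using Li_Yorke_set_dense[OF e_dense e_H2 u_H2 that] by blast
next
  fix x y assume "x \<in> Li_Yorke_set e u" "y \<in> Li_Yorke_set e u" "x \<noteq> y"
  then obtain m c m' c' where
      x: "x = (\<lambda>i. e m i + complex_of_real c * u i)" "(1/2)^Suc m < c" "c < (1/2)^m" and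
      y: "y = (\<lambda>i. e m' i + complex_of_real c' * u i)" "(1/2)^Suc m' < c'" "c' < (1/2)^m'"
    by (auto simp: Li_Yorke_set_def)
  have "c \<noteq> c'"
    using half_power_intervals_disjoint[of m c m'] x y \<open>x \<noteq> y\<close> by auto
  obtain K K' where "(T ^^ K) (e m) = (\<lambda>i. 0)" "(T ^^ K') (e m') = (\<lambda>i. 0)"
    using e_null by metis
  from Li_Yorke_pair[OF this \<open>c \<noteq> c'\<close> u_H2 u_liminf u_limsup]
  show "liminf (\<lambda>k. ereal (h2norm ((T ^^ k) x - (T ^^ k) y))) = 0"
    and "limsup (\<lambda>k. ereal (h2norm ((T ^^ k) x - (T ^^ k) y))) = \<infinity>"
    unfolding x(1) y(1) .
qed

end

interpretation block_sum: H2_operator "block_sum n" for n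
proof
  show "block_sum n (\<lambda>i. a i + b i) = (\<lambda>i. block_sum n a i + block_sum n b i)" for a b
    by (simp add: fun_eq_iff block_sum_def sum.distrib)
  show "block_sum n (\<lambda>i. c * a i) = (\<lambda>i. c * block_sum n a i)" for c a
    by (simp add: fun_eq_iff block_sum_def sum_distrib_left)
  show "block_sum n a \<in> H2" if "a \<in> H2" for a
  proof (cases "n = 0")
    case True
    then have "block_sum n a = (\<lambda>i. 0)" by (simp add: fun_eq_iff block_sum_def)
    then show ?thesis by (simp add: H2_zero)
  qed (simp add: H2_block_sum(1)[OF _ that])
qed

lemma h2norm_iter_block_sum_le:
  assumes "0 < n" "g \<in> H2"
  shows "h2norm ((block_sum n ^^ k) g) \<le> sqrt n ^ k * h2norm g"
proof (induction k)
  case (Suc k)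
  have "h2norm ((block_sum n ^^ Suc k) g) \<le> sqrt n * h2norm ((block_sum n ^^ k) g)"
    using H2_block_sum(2)[OF assms(1) block_sum.iter_H2[OF assms(2)]] by simp
  also have "\<dots> \<le> sqrt n * (sqrt n ^ k * h2norm g)"
    using Suc by (intro mult_left_mono) auto
  finally show ?case by (simp add: mult.assoc)
qed simp

lemma iter_Wadj_eq_iter_block_sum:
  assumes "0 < n" "x \<in> H2"
  shows "(Wadj n ^^ k) x = (block_sum n ^^ k) x"
  by (induction k) (simp_all add: Wadj_eq_block_sum[OF assms(1)] block_sum.iter_H2[OF assms(2)])

lemma densely_Li_Yorke_chaotic_cong:
  assumes "\<And>x k. x \<in> Y \<Longrightarrow> (T ^^ k) x = (T' ^^ k) x"
  shows "densely_Li_Yorke_chaotic Y nrm T \<longleftrightarrow> densely_Li_Yorke_chaotic Y nrm T'"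
  unfolding densely_Li_Yorke_chaotic_def
  by (intro ex_cong1 conj_cong refl) (auto simp: assms subset_iff)

lemma block_sum_indicator:
  assumes "0 < n"
  shows "block_sum n (indicator {n*p..<n*q}) = (\<lambda>j. of_nat n * indicator {p..<q} j)"
proof
  fix j
  have "indicator {n*p..<n*q} (n*j + r) = (indicator {p..<q} j :: complex)" if "r < n" for r
  proof -
    have "n*j + r \<in> {j*n..<j*n+n}" using that by (simp add: mult.commute)
    then have "(n*j + r) div n = j" by (rule div_eq_of_mem_block)
    then show ?thesis
      using assms less_eq_div_iff_mult_less_eq[OF assms, of p "n*j + r"]
        div_less_iff_less_mult[OF assms, of "n*j + r" q]
      by (simp add: indicator_def mult.commute)
  qed
  then show "block_sum n (indicator {n*p..<n*q}) j = of_nat n * indicator {p..<q} j"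
    by (simp add: block_sum_def)
qed

lemma iter_block_sum_indicator:
  assumes "0 < n"
  shows "(block_sum n ^^ k) (indicator {n^k*p..<n^k*q}) = (\<lambda>j. of_nat n ^ k * indicator {p..<q} j)"
proof (induction k arbitrary: p q)
  case (Suc k)
  have "(block_sum n ^^ Suc k) (indicator {n^Suc k*p..<n^Suc k*q})
      = (block_sum n ^^ k) (block_sum n (indicator {n*(n^k*p)..<n*(n^k*q)}))"
    by (simp add: funpow_Suc_right mult.assoc del: funpow.simps)
  also have "\<dots> = (\<lambda>j. of_nat n * (block_sum n ^^ k) (indicator {n^k*p..<n^k*q}) j)"
    by (simp add: block_sum_indicator[OF assms] block_sum.iter_scale)
  finally show ?case by (simp add: Suc mult.assoc)
qed simp

lemma iter_block_sum_zero_sum: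
  assumes "0 < n" "\<And>i. n^K \<le> i \<Longrightarrow> d i = 0" "(\<Sum>i<n^K. d i) = 0"
  shows "(block_sum n ^^ K) d = (\<lambda>i. 0)"
  using assms(2,3)
proof (induction K arbitrary: d)
  case 0
  then show ?case by (simp add: fun_eq_iff) (metis Suc_leI neq0_conv)
next
  case (Suc K)
  have "block_sum n d j = 0" if "n^K \<le> j" for j
  proof -
    have "n^Suc K \<le> n*j + r" for r using that assms(1) by (simp add: trans_le_add1)
    then show ?thesis using Suc.prems(1) by (simp add: block_sum_def)
  qed
  moreover have "(\<Sum>j<n^K. block_sum n d j) = 0"
    using Suc.prems(2) by (simp add: block_sum_eq_sum_block sum.nat_group mult.commute)
  ultimately have "(block_sum n ^^ K) (block_sum n d) = (\<lambda>i. 0)"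
    by (rule Suc.IH)
  then show ?case by (simp add: funpow_Suc_right del: funpow.simps)
qed

section \<open>A dense sequence of eventually annihilated vectors\<close>

definition gauss_rat :: "rat \<times> rat \<Rightarrow> complex" where
  "gauss_rat p = Complex (of_rat (fst p)) (of_rat (snd p))"

lemma gauss_rat_dense:
  assumes "0 < e"
  shows "\<exists>p. cmod (z - gauss_rat p) < e"
proof -
  obtain a where a: "Re z - e/2 < of_rat a" "of_rat a < Re z + e/2"
    using Rats_dense_in_real[of "Re z - e/2" "Re z + e/2"] assms by (auto elim: Rats_cases)
  obtain b where b: "Im z - e/2 < of_rat b" "of_rat b < Im z + e/2"
    using Rats_dense_in_real[of "Im z - e/2" "Im z + e/2"] assms by (auto elim: Rats_cases)
  have "cmod (z - gauss_rat (a, b)) \<le> \<bar>Re (z - gauss_rat (a, b))\<bar> + \<bar>Im (z - gauss_rat (a, b))\<bar>"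
    by (rule cmod_le)
  also have "\<dots> < e"
    using a b by (simp add: gauss_rat_def abs_less_iff)
  finally show ?thesis by blast
qed

definition zero_sum_pad :: "complex list \<Rightarrow> nat \<Rightarrow> nat \<Rightarrow> complex" where
  "zero_sum_pad xs M i =
     (if i < length xs then xs ! i
      else if i < length xs + Suc M then - sum_list xs / of_nat (Suc M) else 0)"

lemma zero_sum_pad_eq_0: "length xs + Suc M \<le> i \<Longrightarrow> zero_sum_pad xs M i = 0"
  by (simp add: zero_sum_pad_def)

lemma sum_zero_sum_pad:
  assumes "length xs + Suc M \<le> N"
  shows "(\<Sum>i<N. zero_sum_pad xs M i) = 0"
proof -
  let ?L = "length xs"
  have "(\<Sum>i<N. zero_sum_pad xs M i) = (\<Sum>i<?L + Suc M. zero_sum_pad xs M i)"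
    by (rule sum.mono_neutral_right) (use assms in \<open>auto simp: zero_sum_pad_eq_0\<close>)
  also have "\<dots> = (\<Sum>i\<in>{0..<?L}. zero_sum_pad xs M i) + (\<Sum>i\<in>{?L..<?L + Suc M}. zero_sum_pad xs M i)"
    by (simp add: atLeast0LessThan[symmetric] sum.atLeastLessThan_concat)
  also have "\<dots> = (\<Sum>i<?L. xs ! i) + (\<Sum>i\<in>{?L..<?L + Suc M}. - sum_list xs / of_nat (Suc M))"
    by (intro arg_cong2[where f = "(+)"] sum.cong) (auto simp: zero_sum_pad_def)
  also have "\<dots> = 0"
    by (simp add: sum_list_sum_nth atLeast0LessThan del: of_nat_Suc)
  finally show ?thesis .
qed

lemma iter_block_sum_zero_sum_pad:
  assumes "2 \<le> n"
  shows "\<exists>K. (block_sum n ^^ K) (zero_sum_pad xs M) = (\<lambda>i. 0)"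
proof
  let ?K = "length xs + Suc M"
  have "?K < 2^?K" by (rule less_exp)
  also have "(2::nat)^?K \<le> n^?K" by (rule power_mono) (use assms in auto)
  finally show "(block_sum n ^^ ?K) (zero_sum_pad xs M) = (\<lambda>i. 0)"
    using assms by (intro iter_block_sum_zero_sum sum_zero_sum_pad) (auto simp: zero_sum_pad_eq_0)
qed

lemma h2norm_tail_small:
  assumes "y \<in> H2" "0 < d"
  shows "\<exists>L. (\<lambda>i. if i < L then 0 else y i) \<in> H2 \<and> h2norm (\<lambda>i. if i < L then 0 else y i) < d"
proof -
  obtain L where L: "norm (\<Sum>i. (cmod (y (i + L)))\<^sup>2) < d\<^sup>2"
    using suminf_exist_split[of "d\<^sup>2" "\<lambda>k. (cmod (y k))\<^sup>2"] assms by (auto simp: H2_summable)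
  let ?t = "\<lambda>i. if i < L then 0 else y i"
  have summable: "summable (\<lambda>i. (cmod (?t i))\<^sup>2)"
    by (rule summable_comparison_test[OF _ H2_summable[OF assms(1)]]) auto
  have "(\<Sum>i. (cmod (?t i))\<^sup>2) = (\<Sum>i. (cmod (y (i + L)))\<^sup>2)"
    using suminf_split_initial_segment[OF summable, of L] by simp
  then have "(\<Sum>i. (cmod (?t i))\<^sup>2) < d\<^sup>2"
    using L by simp
  then have "h2norm ?t < sqrt (d\<^sup>2)"
    unfolding h2norm_def by (rule real_sqrt_less_mono)
  with summable show ?thesis
    using assms(2) by (auto simp: H2_def)
qed

lemma gauss_rat_approx_initial_segment:
  assumes "0 < d"
  shows "\<exists>ps. length ps = L \<and> h2norm (\<lambda>i. if i < L then y i - gauss_rat (ps ! i) else 0) < d"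
proof -
  define \<eta> where "\<eta> = d / sqrt (L + 1)"
  have "0 < \<eta>" using assms by (simp add: \<eta>_def)
  then have "\<forall>i. \<exists>p. cmod (y i - gauss_rat p) < \<eta>"
    using gauss_rat_dense by blast
  then obtain f where f: "\<And>i. cmod (y i - gauss_rat (f i)) < \<eta>"
    by metis
  define ps where "ps = map f [0..<L]"
  have "h2norm (\<lambda>i. if i < L then y i - gauss_rat (ps ! i) else 0)
      = L2_set (\<lambda>i. cmod (y i - gauss_rat (f i))) {..<L}"
    by (subst H2_finite_support(2)[of L]) (auto simp: ps_def intro: L2_set_cong)
  also have "\<dots> \<le> L2_set (\<lambda>i. \<eta>) {..<L}"
    by (rule L2_set_mono) (auto simp: f less_imp_le)
  also have "\<dots> = sqrt L * \<eta>"
    using \<open>0 < \<eta>\<close> by (simp add: L2_set_def real_sqrt_mult)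
  also have "\<dots> < d"
    using assms by (simp add: \<eta>_def field_simps real_sqrt_less_iff)
  finally show ?thesis
    by (intro exI[of _ ps]) (simp add: ps_def)
qed

lemma h2norm_constant_block:
  "h2norm (\<lambda>i. c / of_nat (Suc M) * indicator {L..<L + Suc M} i) = cmod c / sqrt (Suc M)"
  unfolding H2_scale(2)[OF H2_indicator] h2norm_indicator
  by (simp add: norm_divide field_simps del: of_nat_Suc)

lemma zero_sum_pad_dense:
  assumes "y \<in> H2" "0 < \<epsilon>"
  shows "\<exists>ps M. h2norm (\<lambda>i. y i - zero_sum_pad (map gauss_rat ps) M i) < \<epsilon>"
proof -
  define d where "d = \<epsilon> / 3"
  have "0 < d" using assms by (simp add: d_def)
  obtain L where tail_H2: "(\<lambda>i. if i < L then 0 else y i) \<in> H2"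
    and tail: "h2norm (\<lambda>i. if i < L then 0 else y i) < d"
    using h2norm_tail_small[OF assms(1) \<open>0 < d\<close>] by blast
  obtain ps where "length ps = L"
    and head: "h2norm (\<lambda>i. if i < L then y i - gauss_rat (ps ! i) else 0) < d"
    using gauss_rat_approx_initial_segment[OF \<open>0 < d\<close>] by blast
  define s where "s = sum_list (map gauss_rat ps)"
  obtain M where "(cmod s / d)\<^sup>2 < real (Suc M)"
    using reals_Archimedean2 less_Suc_eq of_nat_less_iff by (metis less_trans lessI)
  then have "cmod s / d < sqrt (Suc M)"
    by (rule real_less_rsqrt)
  define pad where "pad i = s / of_nat (Suc M) * indicator {L..<L + Suc M} i" for i
  have "h2norm pad = cmod s / sqrt (Suc M)"
    unfolding pad_def by (rule h2norm_constant_block)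
  also have "\<dots> < d"
    using \<open>cmod s / d < sqrt (Suc M)\<close> \<open>0 < d\<close> by (simp add: field_simps del: of_nat_Suc)
  finally have "h2norm pad < d" .
  have split: "(\<lambda>i. y i - zero_sum_pad (map gauss_rat ps) M i) =
      (\<lambda>i. (if i < L then y i - gauss_rat (ps ! i) else 0) + ((if i < L then 0 else y i) + pad i))"
    by (auto simp: fun_eq_iff zero_sum_pad_def pad_def s_def \<open>length ps = L\<close>)
  have head_H2: "(\<lambda>i. if i < L then y i - gauss_rat (ps ! i) else 0) \<in> H2"
    by (rule H2_finite_support(1)[of L]) simp
  have pad_H2: "pad \<in> H2"
    unfolding pad_def by (rule H2_scale(1)[OF H2_indicator])
  have "h2norm (\<lambda>i. y i - zero_sum_pad (map gauss_rat ps) M i)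
      \<le> h2norm (\<lambda>i. if i < L then y i - gauss_rat (ps ! i) else 0)
        + (h2norm (\<lambda>i. if i < L then 0 else y i) + h2norm pad)"
    unfolding split using H2_add[OF head_H2 H2_add(1)[OF tail_H2 pad_H2]] H2_add(2)[OF tail_H2 pad_H2]
    by linarith
  also have "\<dots> < 3 * d"
    using head tail \<open>h2norm pad < d\<close> by linarith
  finally show ?thesis
    by (auto simp: d_def)
qed

text \<open>The index m encodes a pair; its second component is ignored, so that every padded
  Gaussian-rational vector recurs at arbitrarily large indices.\<close>

definition dense_null_seq :: "nat \<Rightarrow> nat \<Rightarrow> complex" where
  "dense_null_seq m = (case from_nat (fst (prod_decode m)) of (ps, M) \<Rightarrow> zero_sum_pad (map gauss_rat ps) M)"

lemma H2_dense_null_seq: "dense_null_seq m \<in> H2"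
proof -
  obtain ps :: "(rat \<times> rat) list" and M :: nat where "from_nat (fst (prod_decode m)) = (ps, M)"
    by fastforce
  then show ?thesis
    unfolding dense_null_seq_def
    by (auto intro: H2_finite_support(1)[of "length ps + Suc M"] simp: zero_sum_pad_eq_0)
qed

lemma iter_block_sum_dense_null_seq:
  "2 \<le> n \<Longrightarrow> \<exists>K. (block_sum n ^^ K) (dense_null_seq m) = (\<lambda>i. 0)"
  unfolding dense_null_seq_def by (auto split: prod.split intro: iter_block_sum_zero_sum_pad)

lemma dense_null_seq_frequently_close:
  assumes "y \<in> H2" "0 < \<epsilon>"
  shows "\<exists>m\<ge>N. h2norm (y - dense_null_seq m) < \<epsilon>"
proof -
  obtain ps M where close: "h2norm (\<lambda>i. y i - zero_sum_pad (map gauss_rat ps) M i) < \<epsilon>"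
    using zero_sum_pad_dense[OF assms] by blast
  define m where "m = prod_encode (to_nat (ps, M), N)"
  have "dense_null_seq m = zero_sum_pad (map gauss_rat ps) M"
    by (simp add: dense_null_seq_def m_def)
  moreover have "N \<le> m"
    unfolding m_def by (rule le_prod_encode_2)
  ultimately show ?thesis
    using close by (auto simp: fun_diff_def)
qed

section \<open>An irregular vector\<close>

lemma sum_half_powers: "a \<le> b \<Longrightarrow> (\<Sum>j\<in>{a..<b}. (1/2::real)^j) = 2 * (1/2)^a - 2 * (1/2)^b"
  by (induction b rule: dec_induct) (simp_all add: sum.atLeastLessThan_Suc)

lemma sum_half_powers_le: "(\<Sum>j\<in>{Suc J..<N}. (1/2::real)^j) \<le> (1/2)^J"
  by (cases "Suc J \<le> N") (simp_all add: sum_half_powers)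

lemma sqrt_power_even: "0 \<le> x \<Longrightarrow> sqrt x ^ (2*a) = x ^ a"
  by (simp add: power_mult)

lemma exponent_gap:
  assumes "J < j"
  shows "2*j + 4^J + 1 \<le> (4::nat)^j"
proof -
  obtain d where d: "j = Suc d" "J \<le> d" using assms by (cases j) auto
  have "d < 2^d" by (rule less_exp)
  also have "(2::nat)^d \<le> 4^d" by (rule power_mono) auto
  finally have "d < 4^d" .
  moreover have "(4::nat)^J \<le> 4^d" using d(2) by (rule power_increasing) simp
  moreover have "(4::nat)^j = 4 * 4^d" by (simp add: d(1))
  ultimately show ?thesis using d(1) by linarith
qed

context
  fixes n :: nat
  assumes two_le_n: "2 \<le> n"
begin

lemma n_pos: "0 < n"
  using two_le_n by simp

lemma add_2_le_square: "n + 2 \<le> n^2"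
proof -
  have "2 * n \<le> n * n" using two_le_n by (rule mult_right_mono) simp
  then show ?thesis using two_le_n unfolding power2_eq_square by linarith
qed

definition bump :: "nat \<Rightarrow> nat \<Rightarrow> complex" where
  "bump m i = 1 / of_nat n ^ m * (indicator {n^m*n..<n^m*(n+1)} i - indicator {n^m*(n+1)..<n^m*(n+2)} i)"

lemma H2_bump: "bump m \<in> H2"
  unfolding bump_def by (intro H2_scale(1) H2_diff(1) H2_indicator)

lemma iter_block_sum_bump:
  "(block_sum n ^^ m) (bump m) = (\<lambda>j. indicator {n..<n+1} j - indicator {n+1..<n+2} j)"
proof -
  have "(block_sum n ^^ m) (bump m) = (\<lambda>j. 1 / of_nat n ^ m *
      (of_nat n ^ m * indicator {n..<n+1} j - of_nat n ^ m * indicator {n+1..<n+2} j))"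
    unfolding bump_def[abs_def] block_sum.iter_scale block_sum.iter_diff
      iter_block_sum_indicator[OF n_pos] ..
  then show ?thesis
    using n_pos by (simp add: right_diff_distrib[symmetric])
qed

lemma iter_block_sum_bump_eq_0:
  assumes "m + 2 \<le> k"
  shows "(block_sum n ^^ k) (bump m) = (\<lambda>i. 0)"
proof (rule block_sum.iter_eq_zero_mono[OF iter_block_sum_zero_sum[OF n_pos] assms])
  have "n^m * (n+2) \<le> n^(m+2)"
    using mult_left_mono[OF add_2_le_square, of "n^m"] by (metis power_add zero_le)
  then show "bump m i = 0" if "n^(m+2) \<le> i" for i
    using that by (simp add: bump_def indicator_def)
  have "n^m * (n+1) \<le> n^(m+2)"
    using \<open>n^m * (n+2) \<le> n^(m+2)\<close> by (meson add_left_mono le_trans mult_le_mono2 one_le_numeral)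
  then have A: "(\<Sum>i<n^(m+2). indicator {n^m*n..<n^m*(n+1)} i) = (of_nat (n^m) :: complex)"
    by (simp add: sum_indicator_lessThan algebra_simps)
  have B: "(\<Sum>i<n^(m+2). indicator {n^m*(n+1)..<n^m*(n+2)} i) = (of_nat (n^m) :: complex)"
    using \<open>n^m * (n+2) \<le> n^(m+2)\<close> by (simp add: sum_indicator_lessThan algebra_simps)
  show "(\<Sum>i<n^(m+2). bump m i) = 0"
    unfolding bump_def sum_distrib_left[symmetric] sum_subtractf A B by simp
qed

lemma h2norm_bump: "h2norm (bump (2*q)) \<le> 2 / real n ^ q"
proof -
  let ?a = "indicator {n^(2*q)*n..<n^(2*q)*(n+1)} :: nat \<Rightarrow> complex"
  let ?b = "indicator {n^(2*q)*(n+1)..<n^(2*q)*(n+2)} :: nat \<Rightarrow> complex"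
  have "h2norm (bump (2*q)) = 1 / real n ^ (2*q) * h2norm (\<lambda>i. ?a i - ?b i)"
    unfolding bump_def[abs_def] H2_scale(2)[OF H2_diff(1)[OF H2_indicator H2_indicator]]
    by (simp add: norm_divide norm_power)
  also have "\<dots> \<le> 1 / real n ^ (2*q) * (h2norm ?a + h2norm ?b)"
    by (intro mult_left_mono H2_diff(2) H2_indicator) simp
  also have "h2norm ?a = real n ^ q" "h2norm ?b = real n ^ q"
    by (simp_all add: h2norm_indicator algebra_simps power_mult)
  then have "1 / real n ^ (2*q) * (h2norm ?a + h2norm ?b) = 2 / real n ^ q"
    using n_pos by (simp add: power_mult power2_eq_square field_simps)
  finally show ?thesis .
qed

definition layer :: "nat \<Rightarrow> nat \<Rightarrow> complex" where
  "layer j i = 2^j * bump (2*4^j) i"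

lemma H2_layer: "layer j \<in> H2"
  unfolding layer_def by (rule H2_scale(1)[OF H2_bump])

lemma h2norm_layer: "h2norm (layer j) \<le> 2^j * (2 / real n ^ 4^j)"
proof -
  have "h2norm (layer j) = 2^j * h2norm (bump (2*4^j))"
    unfolding layer_def[abs_def] H2_scale(2)[OF H2_bump] by (simp add: norm_power)
  also have "\<dots> \<le> 2^j * (2 / real n ^ 4^j)"
    by (rule mult_left_mono[OF h2norm_bump]) simp
  finally show ?thesis .
qed

lemma layer_eq_0_below: 
  assumes "i < j"
  shows "layer j i = 0"
proof -
  have "j < 2^j" by (rule less_exp)
  moreover have "(2::nat)^j \<le> 4^j" by (rule power_mono) auto
  ultimately have "j \<le> 2*4^j" by linarith
  then have "(2::nat)^j \<le> 2^(2*4^j)" by (rule power_increasing) simp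
  with \<open>j < 2^j\<close> have "j < 2^(2*4^j)" by linarith
  also have "(2::nat)^(2*4^j) \<le> n^(2*4^j)"
    using two_le_n by (rule power_mono) simp
  also have "\<dots> \<le> n^(2*4^j) * n"
    using n_pos by simp
  finally show ?thesis
    using assms by (simp add: layer_def bump_def)
qed

lemma iter_block_sum_layer:
  "(block_sum n ^^ (2*4^j)) (layer j) = (\<lambda>i. 2^j * (indicator {n..<n+1} i - indicator {n+1..<n+2} i))"
  unfolding layer_def[abs_def] block_sum.iter_scale iter_block_sum_bump ..

lemma iter_block_sum_layer_eq_0: "2*4^j + 2 \<le> k \<Longrightarrow> (block_sum n ^^ k) (layer j) = (\<lambda>i. 0)"
  unfolding layer_def[abs_def] block_sum.iter_scale by (simp add: iter_block_sum_bump_eq_0)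

lemma layer_le_tail_weight:
  assumes "J < j"
  shows "2^j * (2 / real n ^ 4^j) \<le> 2 * (1/2)^j / real n ^ (4^J+1)"
proof -
  have "(4::nat)^j \<le> (n^2)^j"
    using add_2_le_square two_le_n by (intro power_mono) auto
  then have "(4::nat)^j * n^(4^J+1) \<le> n^(2*j + 4^J + 1)"
    by (simp add: power_mult power_add)
  also have "\<dots> \<le> n^(4^j)"
    using n_pos by (intro power_increasing exponent_gap assms) auto
  finally have "real (4^j * n^(4^J+1)) \<le> real (n^(4^j))"
    by linarith
  then have ratio: "4^j / real n ^ (4^j) \<le> 1 / real n ^ (4^J+1)"
    using n_pos by (simp add: divide_simps)
  have "(4::real)^j = 2^j * 2^j" by (simp flip: power_mult_distrib)
  then have "2^j * (2 / real n ^ (4^j)) = 2 * (1/2)^j * (4^j / real n ^ (4^j))"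
    by (simp add: field_simps)
  also have "\<dots> \<le> 2 * (1/2)^j * (1 / real n ^ (4^J+1))"
    by (rule mult_left_mono[OF ratio]) simp
  finally show ?thesis by simp
qed

definition irregular_vector :: "nat \<Rightarrow> complex" where
  "irregular_vector i = (\<Sum>j<Suc i. layer j i)"

definition irregular_tail :: "nat \<Rightarrow> nat \<Rightarrow> complex" where
  "irregular_tail J i = irregular_vector i - (\<Sum>j<Suc J. layer j i)"

lemma irregular_tail_eq_sum:
  assumes "i < N" "J < N"
  shows "irregular_tail J i = (\<Sum>j\<in>{Suc J..<N}. layer j i)"
proof -
  have "irregular_vector i = (\<Sum>j<N. layer j i)"
    unfolding irregular_vector_def
    by (rule sum.mono_neutral_left) (use assms in \<open>auto simp: layer_eq_0_below\<close>)
  also have "\<dots> = (\<Sum>j<Suc J. layer j i) + (\<Sum>j\<in>{Suc J..<N}. layer j i)"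
    using assms sum.atLeastLessThan_concat[of 0 "Suc J" N "\<lambda>j. layer j i"]
    by (simp add: atLeast0LessThan del: sum.op_ivl_Suc)
  finally show ?thesis by (simp add: irregular_tail_def)
qed

lemma H2_irregular_tail:
  shows "irregular_tail J \<in> H2" and "h2norm (irregular_tail J) \<le> 2 * (1/2)^J / real n ^ (4^J+1)"
proof -
  let ?g = "\<lambda>N i. \<Sum>j\<in>{Suc J..<N}. layer j i"
  have bound: "h2norm (?g N) \<le> 2 * (1/2)^J / real n ^ (4^J+1)" for N
  proof -
    have "h2norm (?g N) \<le> (\<Sum>j\<in>{Suc J..<N}. h2norm (layer j))"
      by (rule h2norm_sum_le[OF H2_layer])
    also have "\<dots> \<le> (\<Sum>j\<in>{Suc J..<N}. 2 * (1/2)^j / real n ^ (4^J+1))"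
      by (rule sum_mono, rule order_trans[OF h2norm_layer layer_le_tail_weight]) auto
    also have "\<dots> = 2 / real n ^ (4^J+1) * (\<Sum>j\<in>{Suc J..<N}. (1/2)^j)"
      by (simp add: sum_distrib_left)
    also have "\<dots> \<le> 2 / real n ^ (4^J+1) * (1/2)^J"
      by (rule mult_left_mono[OF sum_half_powers_le]) simp
    finally show ?thesis by simp
  qed
  have "\<forall>\<^sub>F N in sequentially. ?g N i = irregular_tail J i" for i
    by (intro eventually_sequentiallyI[of "Suc i + Suc J"] irregular_tail_eq_sum[symmetric]) auto
  from H2_pointwise_limit[OF H2_sum[OF H2_layer] bound this]
  show "irregular_tail J \<in> H2" "h2norm (irregular_tail J) \<le> 2 * (1/2)^J / real n ^ (4^J+1)" .
qed

lemma irregular_vector_split: "irregular_vector = (\<lambda>i. (\<Sum>j<Suc J. layer j i) + irregular_tail J i)"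
  by (simp add: irregular_tail_def)

lemma H2_irregular_vector: "irregular_vector \<in> H2"
  by (subst irregular_vector_split[of 0]) (intro H2_add(1) H2_sum H2_layer H2_irregular_tail)

lemma h2norm_iter_irregular_small: "h2norm ((block_sum n ^^ (2*4^J+2)) irregular_vector) \<le> 2 * (1/2)^J"
proof -
  define k :: nat where "k = 2*4^J+2"
  have "(block_sum n ^^ k) (layer j) = (\<lambda>i. 0)" if "j < Suc J" for j
    using that by (intro iter_block_sum_layer_eq_0) (simp add: k_def power_increasing)
  then have "(block_sum n ^^ k) irregular_vector = (block_sum n ^^ k) (irregular_tail J)"
    by (subst irregular_vector_split[of J]) (simp add: block_sum.iter_add block_sum.iter_sum)
  moreover have "sqrt (real n) ^ k = real n ^ (4^J+1)"
    using sqrt_power_even[of "real n" "4^J+1"] by (simp add: k_def algebra_simps)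
  ultimately have "h2norm ((block_sum n ^^ k) irregular_vector) \<le> real n ^ (4^J+1) * h2norm (irregular_tail J)"
    using h2norm_iter_block_sum_le[OF n_pos H2_irregular_tail(1), of k J] by simp
  also have "\<dots> \<le> 2 * (1/2)^J"
    using H2_irregular_tail(2)[of J] n_pos by (simp add: field_simps)
  finally show ?thesis by (simp add: k_def)
qed

lemma h2norm_iter_irregular_large: "2^J - 2 \<le> h2norm ((block_sum n ^^ (2*4^J)) irregular_vector)"
proof -
  define k :: nat where "k = 2*4^J"
  let ?t = "(block_sum n ^^ k) (irregular_tail J)"
  have "(block_sum n ^^ k) (layer j) = (\<lambda>i. 0)" if "j < J" for j
  proof (rule iter_block_sum_layer_eq_0)
    have "4 * 4^j \<le> (4::nat)^J"
      using power_increasing[of "Suc j" J "4::nat"] that by simp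
    then show "2*4^j + 2 \<le> k"
      using one_le_power[of "4::nat" j] unfolding k_def by linarith
  qed
  then have coord: "(block_sum n ^^ k) irregular_vector n = 2^J + ?t n"
    by (subst irregular_vector_split[of J])
      (simp add: block_sum.iter_add block_sum.iter_sum iter_block_sum_layer k_def)
  have "cmod (?t n) \<le> h2norm ?t"
    by (rule norm_le_h2norm[OF block_sum.iter_H2[OF H2_irregular_tail(1)]])
  also have "\<dots> \<le> sqrt (real n) ^ k * h2norm (irregular_tail J)"
    by (rule h2norm_iter_block_sum_le[OF n_pos H2_irregular_tail(1)])
  also have "\<dots> = real n ^ (4^J) * h2norm (irregular_tail J)"
    using sqrt_power_even[of "real n" "4^J"] by (simp add: k_def)
  also have "\<dots> \<le> real n ^ (4^J) * (2 * (1/2)^J / real n ^ (4^J+1))"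
    by (rule mult_left_mono[OF H2_irregular_tail(2)]) simp
  also have "\<dots> = 2 * (1/2)^J / real n"
    using n_pos by (simp add: field_simps)
  also have "\<dots> \<le> 2"
  proof -
    have "1 \<le> real n * 2^J"
      using mult_mono[of 1 "real n" 1 "(2::real)^J"] n_pos by simp
    then show ?thesis by (simp add: field_simps)
  qed
  finally have "cmod (?t n) \<le> 2" .
  moreover have "2^J - cmod (?t n) \<le> cmod ((block_sum n ^^ k) irregular_vector n)"
    using norm_diff_ineq[of "(2::complex)^J" "?t n"] by (simp add: coord norm_power)
  moreover have "cmod ((block_sum n ^^ k) irregular_vector n) \<le> h2norm ((block_sum n ^^ k) irregular_vector)"
    by (rule norm_le_h2norm[OF block_sum.iter_H2[OF H2_irregular_vector]])
  ultimately show ?thesis by (simp add: k_def)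
qed

lemma liminf_irregular_vector:
  "liminf (\<lambda>k. ereal (h2norm ((block_sum n ^^ k) irregular_vector))) = 0"
proof (rule liminf_ereal_eq_0_if_subseq)
  show "strict_mono (\<lambda>J. 2*4^J+2 :: nat)"
    by (rule strict_monoI_Suc) simp
  have lim: "(\<lambda>J. 2 * (1/2::real)^J) \<longlonglongrightarrow> 0"
    by (intro tendsto_mult_right_zero LIMSEQ_power_zero) simp
  show "((\<lambda>k. h2norm ((block_sum n ^^ k) irregular_vector)) \<circ> (\<lambda>J. 2*4^J+2)) \<longlonglongrightarrow> 0"
    unfolding comp_def
    by (rule tendsto_sandwich[OF _ _ tendsto_const lim]; intro always_eventually allI)
      (intro h2norm_nonneg block_sum.iter_H2 H2_irregular_vector, rule h2norm_iter_irregular_small)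
qed (rule h2norm_nonneg[OF block_sum.iter_H2[OF H2_irregular_vector]])

lemma limsup_irregular_vector:
  "limsup (\<lambda>k. ereal (h2norm ((block_sum n ^^ k) irregular_vector))) = \<infinity>"
proof (rule limsup_ereal_eq_infty_if_subseq)
  show "strict_mono (\<lambda>J. 2*4^J :: nat)"
    by (rule strict_monoI_Suc) simp
  have lim: "filterlim (\<lambda>J. -2 + real J) at_top sequentially"
    by (rule filterlim_tendsto_add_at_top[OF tendsto_const filterlim_real_sequentially])
  have bound: "-2 + real J \<le> h2norm ((block_sum n ^^ (2*4^J)) irregular_vector)" for J
    using h2norm_iter_irregular_large[of J] of_nat_less_two_power[of J, where 'a = real] by linarith
  show "filterlim ((\<lambda>k. h2norm ((block_sum n ^^ k) irregular_vector)) \<circ> (\<lambda>J. 2*4^J))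
      at_top sequentially"
    unfolding comp_def by (intro filterlim_at_top_mono[OF lim] always_eventually allI bound)
qed

theorem densely_Li_Yorke_chaotic_block_sum: "densely_Li_Yorke_chaotic H2 h2norm (block_sum n)"
  by (rule block_sum.densely_Li_Yorke_chaotic_if_irregular_vector[OF H2_dense_null_seq
    iter_block_sum_dense_null_seq[OF two_le_n] dense_null_seq_frequently_close
    H2_irregular_vector liminf_irregular_vector limsup_irregular_vector])

end

theorem mainTheorem16:
  fixes n :: nat
  assumes "n \<ge> 2"
  shows "densely_Li_Yorke_chaotic H2 h2norm (Wadj n)"
proof -
  have "(Wadj n ^^ k) x = (block_sum n ^^ k) x" if "x \<in> H2" for x k
    using iter_Wadj_eq_iter_block_sum[OF _ that] assms by simp
  then show ?thesis
    using densely_Li_Yorke_chaotic_cong densely_Li_Yorke_chaotic_block_sum[OF assms] by blast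
qed

end
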